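(* Let $M$ be an entrywise nonnegative $m\times n$ real matrix and let $M=AW$ be a stable nonnegative matrix factorization with $A\in\mathbb{R}_{\ge0}^{m\times r}$, $W\in\mathbb{R}_{\ge0}^{r\times n}$. Then for every column index $i$, the support of $W_i$ corresponds to a linearly independent set of columns of $A$.
   Context: $W_i$ denotes the $i$-th column of $W$; the support of a vector is the set of indices of its nonzero entries. $\mathrm{aff}(A)=\{\sum_k\alpha_kA_k:\alpha_k\ge0\}$ for columns $A_k$. A subset $S\subseteq[r]$ of columns of $A$ is admissible for $v\in\mathbb{R}^m$ if $v\in\mathrm{aff}(A_S)$ ($A_S$ = columns of $A$ in $S$); a subset $T\subseteq[r]$ of rows of $W$ is admissible for a row vector $u$ if $u$ is a nonnegative combination of the rows of $W$ indexed by $T$. Lexicographic ordering on subsets of $[r]$: if $|S|<|T|$ then $S$ precedes $T$; equal-size subsets compared by standard lexicographic order. $M=AW$ is stable if, with $S_i$ the lexicographically first subset of columns of $A$ admissible for the column $M_i$ and $T_j$ the lexicographically first subset of rows of $W$ admissible for the row $M^j$, each $W_i$ is supported in $S_i$ and each row $A^j$ of $A$ is supported in $T_j$. *)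

theory Defs
  imports Complex_Main
begin

text \<open>Matrices are represented as functions nat => nat => real with explicit
dimensions; an m x r matrix A has entries A j k for j < m, k < r.
Index sets [r] are {..<r}.\<close>

definition nonneg_mat :: "nat \<Rightarrow> nat \<Rightarrow> (nat \<Rightarrow> nat \<Rightarrow> real) \<Rightarrow> bool" where
  "nonneg_mat p q X \<longleftrightarrow> (\<forall>j<p. \<forall>k<q. 0 \<le> X j k)"

definition is_product :: "nat \<Rightarrow> nat \<Rightarrow> nat \<Rightarrow> (nat \<Rightarrow> nat \<Rightarrow> real) \<Rightarrow>
    (nat \<Rightarrow> nat \<Rightarrow> real) \<Rightarrow> (nat \<Rightarrow> nat \<Rightarrow> real) \<Rightarrow> bool" where
  "is_product m r n M A W \<longleftrightarrow> (\<forall>j<m. \<forall>i<n. M j i = (\<Sum>k<r. A j k * W k i))"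

definition col_admissible :: "nat \<Rightarrow> nat \<Rightarrow> (nat \<Rightarrow> nat \<Rightarrow> real) \<Rightarrow> (nat \<Rightarrow> real) \<Rightarrow> nat set \<Rightarrow> bool" where
  "col_admissible m r A v S \<longleftrightarrow> S \<subseteq> {..<r} \<and>
     (\<exists>\<alpha>. (\<forall>k\<in>S. 0 \<le> \<alpha> k) \<and> (\<forall>j<m. v j = (\<Sum>k\<in>S. \<alpha> k * A j k)))"

definition row_admissible :: "nat \<Rightarrow> nat \<Rightarrow> (nat \<Rightarrow> nat \<Rightarrow> real) \<Rightarrow> (nat \<Rightarrow> real) \<Rightarrow> nat set \<Rightarrow> bool" where
  "row_admissible r n W u T \<longleftrightarrow> T \<subseteq> {..<r} \<and>
     (\<exists>\<beta>. (\<forall>k\<in>T. 0 \<le> \<beta> k) \<and> (\<forall>i<n. u i = (\<Sum>k\<in>T. \<beta> k * W k i)))"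

definition lex_precedes :: "nat set \<Rightarrow> nat set \<Rightarrow> bool" where
  "lex_precedes S T \<longleftrightarrow> card S < card T \<or>
     (card S = card T \<and>
      (sorted_list_of_set S, sorted_list_of_set T) \<in> lexord {(a, b). a < b})"

definition lex_first :: "(nat set \<Rightarrow> bool) \<Rightarrow> nat set \<Rightarrow> bool" where
  "lex_first P S \<longleftrightarrow> P S \<and> (\<forall>T. P T \<longrightarrow> \<not> lex_precedes T S)"

definition supp :: "nat \<Rightarrow> (nat \<Rightarrow> real) \<Rightarrow> nat set" where
  "supp p v = {k. k < p \<and> v k \<noteq> 0}"

definition stable_factorization :: "nat \<Rightarrow> nat \<Rightarrow> nat \<Rightarrow> (nat \<Rightarrow> nat \<Rightarrow> real) \<Rightarrow>
    (nat \<Rightarrow> nat \<Rightarrow> real) \<Rightarrow> (nat \<Rightarrow> nat \<Rightarrow> real) \<Rightarrow> bool" where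
  "stable_factorization m r n M A W \<longleftrightarrow>
     (\<forall>i<n. \<forall>S. lex_first (col_admissible m r A (\<lambda>j. M j i)) S \<longrightarrow>
                supp r (\<lambda>k. W k i) \<subseteq> S) \<and>
     (\<forall>j<m. \<forall>T. lex_first (row_admissible r n W (\<lambda>i. M j i)) T \<longrightarrow>
                supp r (\<lambda>k. A j k) \<subseteq> T)"

definition cols_lin_indep :: "nat \<Rightarrow> (nat \<Rightarrow> nat \<Rightarrow> real) \<Rightarrow> nat set \<Rightarrow> bool" where
  "cols_lin_indep m A S \<longleftrightarrow>
     (\<forall>c. (\<forall>j<m. (\<Sum>k\<in>S. c k * A j k) = 0) \<longrightarrow> (\<forall>k\<in>S. c k = 0))"

end

theory Submission
  imports Defs "HOL-Library.List_Lexorder"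
begin

text \<open>This is Caratheodory's theorem for cones. If the columns of \<open>A\<close> indexed by an
admissible set \<open>S\<close> satisfy a linear dependence \<open>c\<close>, then moving the coefficients of
a conic representation of \<open>v\<close> along \<open>-c\<close> until the first one vanishes gives a
representation on a proper subset of \<open>S\<close>. Hence the lexicographically first admissible
set, having minimal cardinality, indexes independent columns; stability puts the support
of \<open>W\<^sub>i\<close> inside that set, and subsets of independent sets are independent.\<close>

lemma lex_first_exists:
  assumes "finite U" and "P S\<^sub>0" and "\<And>S. P S \<Longrightarrow> S \<subseteq> U"
  shows "\<exists>S. lex_first P S"
proof -
  define k where "k = (LEAST k. \<exists>T. P T \<and> card T = k)"
  have k_attained: "\<exists>T. P T \<and> card T = k"
    unfolding k_def by (rule LeastI_ex) (use assms(2) in blast)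
  have k_le: "k \<le> card T" if "P T" for T
    unfolding k_def by (rule Least_le) (use that in blast)
  define F where "F = {T. P T \<and> card T = k}"
  have "finite F"
    using assms(1,3) by (intro finite_subset[of F "Pow U"]) (auto simp: F_def)
  moreover have "F \<noteq> {}"
    using k_attained by (auto simp: F_def)
  ultimately obtain S where "is_arg_min sorted_list_of_set (\<lambda>T. T \<in> F) S"
    using ex_is_arg_min_if_finite by blast
  then have "lex_first P S"
    using k_le unfolding is_arg_min_def lex_first_def lex_precedes_def F_def
    by (auto simp: not_less simp flip: list_less_def)
  then show ?thesis ..
qed

lemma lex_first_card_le:
  assumes "lex_first P S" and "P T"
  shows "card S \<le> card T"
  using assms unfolding lex_first_def lex_precedes_def by (meson not_le)

lemma col_admissible_drop_dependent_column:
  assumes S: "S \<subseteq> {..<r}" "finite S"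
    and \<alpha>: "\<forall>k\<in>S. 0 \<le> \<alpha> k" "\<forall>j<m. v j = (\<Sum>k\<in>S. \<alpha> k * A j k)"
    and c: "\<forall>j<m. (\<Sum>k\<in>S. c k * A j k) = 0" "k\<^sub>0 \<in> S" "0 < c k\<^sub>0"
  shows "\<exists>k\<in>S. col_admissible m r A v (S - {k})"
proof -
  define P where "P = {k\<in>S. 0 < c k}"
  have "finite P" "P \<noteq> {}"
    using S c by (auto simp: P_def)
  define t where "t = Min ((\<lambda>k. \<alpha> k / c k) ` P)"
  have "t \<in> (\<lambda>k. \<alpha> k / c k) ` P"
    unfolding t_def using \<open>finite P\<close> \<open>P \<noteq> {}\<close> by (intro Min_in) auto
  then obtain k\<^sub>1 where k\<^sub>1: "k\<^sub>1 \<in> P" "t = \<alpha> k\<^sub>1 / c k\<^sub>1"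
    by blast
  have t_le: "t \<le> \<alpha> k / c k" if "k \<in> P" for k
    using \<open>finite P\<close> that by (simp add: t_def)
  have "0 \<le> t"
    using k\<^sub>1 \<alpha>(1) by (auto simp: P_def)
  define \<beta> where "\<beta> k = \<alpha> k - t * c k" for k
  have \<beta>_nonneg: "0 \<le> \<beta> k" if "k \<in> S" for k
  proof (cases "0 < c k")
    case True
    then have "t * c k \<le> \<alpha> k"
      using t_le[of k] that by (simp add: P_def pos_le_divide_eq)
    then show ?thesis by (simp add: \<beta>_def)
  next
    case False
    then have "t * c k \<le> 0"
      using \<open>0 \<le> t\<close> by (simp add: mult_nonneg_nonpos)
    then show ?thesis
      using \<alpha>(1) that by (force simp: \<beta>_def)
  qed
  have \<beta>_represents: "v j = (\<Sum>k\<in>S. \<beta> k * A j k)" if "j < m" for j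
  proof -
    have "(\<Sum>k\<in>S. \<beta> k * A j k) = (\<Sum>k\<in>S. \<alpha> k * A j k) - t * (\<Sum>k\<in>S. c k * A j k)"
      by (simp add: \<beta>_def left_diff_distrib sum_subtractf sum_distrib_left mult.assoc)
    then show ?thesis
      using that \<alpha>(2) c(1) by simp
  qed
  have "\<beta> k\<^sub>1 = 0" "k\<^sub>1 \<in> S"
    using k\<^sub>1 by (auto simp: P_def \<beta>_def)
  have "col_admissible m r A v (S - {k\<^sub>1})"
    unfolding col_admissible_def
  proof (intro conjI exI[of _ \<beta>])
    show "\<forall>j<m. v j = (\<Sum>k\<in>S - {k\<^sub>1}. \<beta> k * A j k)"
      using \<beta>_represents \<open>\<beta> k\<^sub>1 = 0\<close> \<open>k\<^sub>1 \<in> S\<close> S(2) by (simp add: sum_diff1)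
  qed (use S \<beta>_nonneg in auto)
  with \<open>k\<^sub>1 \<in> S\<close> show ?thesis ..
qed

lemma cols_lin_indep_if_min_card_admissible:
  assumes adm: "col_admissible m r A v S"
    and min: "\<And>T. col_admissible m r A v T \<Longrightarrow> card S \<le> card T"
  shows "cols_lin_indep m A S"
  unfolding cols_lin_indep_def
proof (intro allI impI ballI)
  fix c k assume c: "\<forall>j<m. (\<Sum>k\<in>S. c k * A j k) = 0" and "k \<in> S"
  have S: "S \<subseteq> {..<r}" "finite S"
    using adm finite_subset by (auto simp: col_admissible_def)
  obtain \<alpha> where \<alpha>: "\<forall>k\<in>S. 0 \<le> \<alpha> k" "\<forall>j<m. v j = (\<Sum>k\<in>S. \<alpha> k * A j k)"
    using adm by (auto simp: col_admissible_def)
  have no_positive_dependence: False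
    if d: "\<forall>j<m. (\<Sum>k\<in>S. d k * A j k) = 0" "k \<in> S" "0 < d k" for d
  proof -
    obtain k' where "k' \<in> S" "col_admissible m r A v (S - {k'})"
      using col_admissible_drop_dependent_column[OF S \<alpha> d] by blast
    then show False
      using min[of "S - {k'}"] S(2) card_Diff1_less by fastforce
  qed
  have "\<forall>j<m. (\<Sum>k\<in>S. - c k * A j k) = 0"
    using c by (simp add: sum_negf)
  then show "c k = 0"
    using no_positive_dependence[OF c \<open>k \<in> S\<close>] no_positive_dependence[of "\<lambda>k. - c k"] \<open>k \<in> S\<close>
    by force
qed

lemma cols_lin_indep_subset:
  assumes "cols_lin_indep m A S" and "T \<subseteq> S" and "finite S"
  shows "cols_lin_indep m A T"
  unfolding cols_lin_indep_def
proof (intro allI impI ballI)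
  fix c k assume c: "\<forall>j<m. (\<Sum>k\<in>T. c k * A j k) = 0" and "k \<in> T"
  define c' where "c' k = (if k \<in> T then c k else 0)" for k
  have "(\<Sum>k\<in>S. c' k * A j k) = (\<Sum>k\<in>T. c k * A j k)" for j
    unfolding c'_def by (rule sum.mono_neutral_cong_right[OF \<open>finite S\<close> \<open>T \<subseteq> S\<close>]) auto
  then have "c' k = 0"
    using assms(1,2) c \<open>k \<in> T\<close> unfolding cols_lin_indep_def by auto
  then show "c k = 0"
    using \<open>k \<in> T\<close> by (simp add: c'_def)
qed

theorem mainTheorem6:
  fixes m r n :: nat and M A W :: "nat \<Rightarrow> nat \<Rightarrow> real"
  assumes "nonneg_mat m n M"
    and "nonneg_mat m r A"
    and "nonneg_mat r n W"
    and "is_product m r n M A W"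
    and "stable_factorization m r n M A W"
  shows "\<forall>i<n. cols_lin_indep m A (supp r (\<lambda>k. W k i))"
proof (intro allI impI)
  fix i assume "i < n"
  let ?adm = "col_admissible m r A (\<lambda>j. M j i)"
  have "?adm {..<r}"
    using assms(3,4) \<open>i < n\<close>
    by (auto simp: col_admissible_def nonneg_mat_def is_product_def mult.commute intro!: exI[of _ "\<lambda>k. W k i"])
  then obtain S where S: "lex_first ?adm S"
    using lex_first_exists[of "{..<r}" ?adm] unfolding col_admissible_def by blast
  have "cols_lin_indep m A S"
  proof (rule cols_lin_indep_if_min_card_admissible)
    show "?adm S" using S by (simp add: lex_first_def)
  qed (rule lex_first_card_le[OF S])
  moreover have "supp r (\<lambda>k. W k i) \<subseteq> S"
    using assms(5) \<open>i < n\<close> S by (auto simp: stable_factorization_def)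
  moreover have "finite S"
    using S finite_subset by (auto simp: lex_first_def col_admissible_def)
  ultimately show "cols_lin_indep m A (supp r (\<lambda>k. W k i))"
    by (rule cols_lin_indep_subset)
qed

end
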